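(* Let $p\ge0$, $\Omega,K>0$, $S\in\mathcal B_{\Omega,K}$, and for $x\in[0,\pi]$ let $\psi(x)=(E+\tilde H(x))^{-1}\tilde\psi(x)\in m$ and $g(x)=\tilde Q(x)T^{-1}\psi(x)$. Then for each $x\in[0,\pi]$, $n\ge1$, $i\in\{0,1\}$, with $C$ depending only on $p,\Omega,K$: (1) $|\psi_{ni}(x)|\le C$; (2) $|g_{ni}(x)|\le C$; (3) $\{g_{ni}(x)\}\in l_2$ and $\|\{g_{ni}(x)\}\|_{l_2}\le C$; (4) $\{g_{n0}(x)-g_{n1}(x)\}_{n\ge1}\in l_1$ and $\sum_n|g_{n0}(x)-g_{n1}(x)|\le C$.
   Context: $\mathcal S_p$: collections $S=\{\lambda_n,\alpha_n\}_{n\ge1}$ of complex numbers with $\rho_n:=\sqrt{\lambda_n}$ ($\arg\rho_n\in[-\pi/2,\pi/2)$), $\rho_n=n-p-1+\varkappa_n$, $\alpha_n=2/\pi+\kappa_n$, $\{\varkappa_n\},\{\kappa_n\}\in l_2$. Model data: $\tilde\rho_n=0$ for $n\le p+1$, $\tilde\rho_n=n-p-1$ for $n\ge p+1$, $\tilde\lambda_n=\tilde\rho_n^2$; $\tilde\alpha_1=1/\pi$, $\tilde\alpha_n=0$ for $2\le n\le p+1$, $\tilde\alpha_n=2/\pi$ for $n\ge p+2$. $\xi_n=|\rho_n-\tilde\rho_n|+|\alpha_n-\tilde\alpha_n|$, $\mathcal B_\Omega=\{S\in\mathcal S_p:(\sum\xi_n^2)^{1/2}\le\Omega\}$. Notation: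 $\lambda_{n0}=\lambda_n,\rho_{n0}=\rho_n,\alpha_{n0}=\alpha_n$, $\lambda_{n1}=\tilde\lambda_n,\rho_{n1}=\tilde\rho_n,\alpha_{n1}=\tilde\alpha_n$, $\hat\rho_n=\rho_n-\tilde\rho_n$; $\tilde\varphi_{ni}(x)=\cos(\rho_{ni}x)$; $\tilde D(x,\lambda,\mu)=\int_0^x\cos(\sqrt\lambda t)\cos(\sqrt\mu t)dt$; $\tilde Q_{ni,kj}(x)=\alpha_{kj}\tilde D(x,\rho_{ni}^2,\rho_{kj}^2)$; $\tilde Q_{nk}=\begin{pmatrix}\tilde Q_{n0,k0}&-\tilde Q_{n0,k1}\\ \tilde Q_{n1,k0}&-\tilde Q_{n1,k1}\end{pmatrix}$; $T_k^{-1}=\begin{pmatrix}\hat\rho_k&1\\0&1\end{pmatrix}$; for $\hat\rho_n\neq0$, $T_n=\begin{pmatrix}\hat\rho_n^{-1}&-\hat\rho_n^{-1}\\0&1\end{pmatrix}$. $\tilde\psi_n=T_n(\tilde\varphi_{n0},\tilde\varphi_{n1})^T$ if $\hat\rho_n\ne0$, $\tilde\psi_n=(-x\sin(\rho_{n1}x),\cos(\rho_{n1}x))^T$ if $\hat\rho_n=0$; $\tilde\psi=(\tilde\psi_n)_{n\ge1}$. $\tilde H_{nk}=T_n\tilde Q_{nk}T_k^{-1}$ if $\hat\rho_n\neq0$; $\tilde H_{nk}=\begin{pmatrix}\partial_\rho[\alpha_{k0}\tilde D(x,\rho^2,\lambda_{k0})]_{\rho=\rho_{n0}}&-\partial_\rho[\alpha_{k1}\tilde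 D(x,\rho^2,\lambda_{k1})]_{\rho=\rho_{n0}}\\ \tilde Q_{n1,k0}&-\tilde Q_{n1,k1}\end{pmatrix}T_k^{-1}$ if $\hat\rho_n=0$. $m$: Banach space of bounded sequences $(a_{ni})_{n\ge1,i=0,1}$ with sup norm; $(\tilde H(x)a)_n=\sum_k\tilde H_{nk}(x)a_k$; $E$ identity; for $f\in m$, $(T^{-1}f)_n=(\hat\rho_nf_{n0}+f_{n1},f_{n1})^T$, $(\tilde Q(x)T^{-1}f)_n=\sum_k\tilde Q_{nk}(x)T_k^{-1}f_k$. $\mathcal B_{\Omega,K}=\{S\in\mathcal B_\Omega:$ for every $x\in[0,\pi]$, $E+\tilde H(x)$ is invertible on $m$ and $\|(E+\tilde H(x))^{-1}\|_{m\to m}\le K\}$. *)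

theory Defs
  imports "HOL-Analysis.Analysis"
begin

text \<open>A data collection S is a pair of sequences lam, al :: nat => complex,
  only the values at indices n >= 1 matter. Elements of the space m are functions
  a :: nat => nat => complex, a n i for n >= 1, i in {0,1}, vanishing at all other indices.
  2x2 matrices are functions nat => nat => complex with indices 0,1.\<close>

definition psqrt :: "complex \<Rightarrow> complex" where
  "psqrt z = (if Re (csqrt z) = 0 then - csqrt z else csqrt z)"

definition rho :: "(nat \<Rightarrow> complex) \<Rightarrow> nat \<Rightarrow> complex" where
  "rho lam n = psqrt (lam n)"

definition rhot :: "nat \<Rightarrow> nat \<Rightarrow> complex" where
  "rhot p n = (if n \<le> p + 1 then 0 else of_nat n - of_nat p - 1)"

definition alphat :: "nat \<Rightarrow> nat \<Rightarrow> complex" where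
  "alphat p n = (if n = 1 then 1 / of_real pi else if n \<le> p + 1 then 0 else 2 / of_real pi)"

definition Sp :: "nat \<Rightarrow> (nat \<Rightarrow> complex) \<Rightarrow> (nat \<Rightarrow> complex) \<Rightarrow> bool" where
  "Sp p lam al \<longleftrightarrow>
     summable (\<lambda>n. (cmod (rho lam (Suc n) - (of_nat (Suc n) - of_nat p - 1)))\<^sup>2) \<and>
     summable (\<lambda>n. (cmod (al (Suc n) - 2 / of_real pi))\<^sup>2)"

definition xi :: "nat \<Rightarrow> (nat \<Rightarrow> complex) \<Rightarrow> (nat \<Rightarrow> complex) \<Rightarrow> nat \<Rightarrow> real" where
  "xi p lam al n = cmod (rho lam n - rhot p n) + cmod (al n - alphat p n)"

definition BOmega :: "nat \<Rightarrow> real \<Rightarrow> (nat \<Rightarrow> complex) \<Rightarrow> (nat \<Rightarrow> complex) \<Rightarrow> bool" where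
  "BOmega p \<Omega> lam al \<longleftrightarrow> Sp p lam al \<and>
     summable (\<lambda>n. (xi p lam al (Suc n))\<^sup>2) \<and>
     sqrt (\<Sum>n. (xi p lam al (Suc n))\<^sup>2) \<le> \<Omega>"

text \<open>rho_{n0} = rho_n, rho_{n1} = rhot_n, similarly alpha; rhohat_n = rho_n - rhot_n.\<close>
definition rhoi :: "nat \<Rightarrow> (nat \<Rightarrow> complex) \<Rightarrow> nat \<Rightarrow> nat \<Rightarrow> complex" where
  "rhoi p lam n i = (if i = 0 then rho lam n else rhot p n)"

definition alphai :: "nat \<Rightarrow> (nat \<Rightarrow> complex) \<Rightarrow> nat \<Rightarrow> nat \<Rightarrow> complex" where
  "alphai p al n i = (if i = 0 then al n else alphat p n)"

definition rhohat :: "nat \<Rightarrow> (nat \<Rightarrow> complex) \<Rightarrow> nat \<Rightarrow> complex" where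
  "rhohat p lam n = rho lam n - rhot p n"

text \<open>Dr x r s = int_0^x cos(r t) cos(s t) dt, so that
  Dtilde(x, r^2, s^2) = Dr x r s for any square roots r, s (cos is even).\<close>
definition Dr :: "real \<Rightarrow> complex \<Rightarrow> complex \<Rightarrow> complex" where
  "Dr x r s = integral {0..x} (\<lambda>t. cos (r * of_real t) * cos (s * of_real t))"

definition mmul :: "(nat \<Rightarrow> nat \<Rightarrow> complex) \<Rightarrow> (nat \<Rightarrow> nat \<Rightarrow> complex) \<Rightarrow> nat \<Rightarrow> nat \<Rightarrow> complex" where
  "mmul A B i j = (\<Sum>l<2. A i l * B l j)"

definition Qe :: "nat \<Rightarrow> (nat \<Rightarrow> complex) \<Rightarrow> (nat \<Rightarrow> complex) \<Rightarrow> real \<Rightarrow> nat \<Rightarrow> nat \<Rightarrow> nat \<Rightarrow> nat \<Rightarrow> complex" where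
  "Qe p lam al x n i k j = alphai p al k j * Dr x (rhoi p lam n i) (rhoi p lam k j)"

definition Qm :: "nat \<Rightarrow> (nat \<Rightarrow> complex) \<Rightarrow> (nat \<Rightarrow> complex) \<Rightarrow> real \<Rightarrow> nat \<Rightarrow> nat \<Rightarrow> nat \<Rightarrow> nat \<Rightarrow> complex" where
  "Qm p lam al x n k i j = (if j = 0 then 1 else -1) * Qe p lam al x n i k j"

definition Tinv :: "nat \<Rightarrow> (nat \<Rightarrow> complex) \<Rightarrow> nat \<Rightarrow> nat \<Rightarrow> nat \<Rightarrow> complex" where
  "Tinv p lam k i j = (if i = 0 then (if j = 0 then rhohat p lam k else 1) else (if j = 0 then 0 else 1))"

definition Tm :: "nat \<Rightarrow> (nat \<Rightarrow> complex) \<Rightarrow> nat \<Rightarrow> nat \<Rightarrow> nat \<Rightarrow> complex" where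
  "Tm p lam n i j = (if i = 0 then (if j = 0 then 1 / rhohat p lam n else - 1 / rhohat p lam n)
                     else (if j = 0 then 0 else 1))"

definition Hd :: "nat \<Rightarrow> (nat \<Rightarrow> complex) \<Rightarrow> (nat \<Rightarrow> complex) \<Rightarrow> real \<Rightarrow> nat \<Rightarrow> nat \<Rightarrow> nat \<Rightarrow> nat \<Rightarrow> complex" where
  "Hd p lam al x n k i j =
     (if i = 0 then (if j = 0 then 1 else -1) *
          deriv (\<lambda>r. alphai p al k j * Dr x r (rhoi p lam k j)) (rho lam n)
      else Qm p lam al x n k i j)"

definition Hm :: "nat \<Rightarrow> (nat \<Rightarrow> complex) \<Rightarrow> (nat \<Rightarrow> complex) \<Rightarrow> real \<Rightarrow> nat \<Rightarrow> nat \<Rightarrow> nat \<Rightarrow> nat \<Rightarrow> complex" where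
  "Hm p lam al x n k =
     (if rhohat p lam n \<noteq> 0 then mmul (Tm p lam n) (mmul (Qm p lam al x n k) (Tinv p lam k))
      else mmul (Hd p lam al x n k) (Tinv p lam k))"

definition psit :: "nat \<Rightarrow> (nat \<Rightarrow> complex) \<Rightarrow> real \<Rightarrow> nat \<Rightarrow> nat \<Rightarrow> complex" where
  "psit p lam x n i =
     (if n \<ge> 1 \<and> i \<le> 1 then
        (if rhohat p lam n \<noteq> 0 then
           (\<Sum>j<2. Tm p lam n i j * cos (rhoi p lam n j * of_real x))
         else if i = 0 then - of_real x * sin (rhot p n * of_real x)
         else cos (rhot p n * of_real x))
      else 0)"

text \<open>The Banach space m (sup norm), represented as bounded arrays vanishing off n>=1, i<=1.\<close>
definition msp :: "(nat \<Rightarrow> nat \<Rightarrow> complex) set" where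
  "msp = {a. (\<forall>n i. (n = 0 \<or> i > 1) \<longrightarrow> a n i = 0) \<and> (\<exists>B. \<forall>n i. cmod (a n i) \<le> B)}"

definition Hop :: "nat \<Rightarrow> (nat \<Rightarrow> complex) \<Rightarrow> (nat \<Rightarrow> complex) \<Rightarrow> real \<Rightarrow>
                   (nat \<Rightarrow> nat \<Rightarrow> complex) \<Rightarrow> nat \<Rightarrow> nat \<Rightarrow> complex" where
  "Hop p lam al x a n i =
     (if n \<ge> 1 \<and> i \<le> 1 then (\<Sum>k. \<Sum>j<2. Hm p lam al x n (Suc k) i j * a (Suc k) j) else 0)"

definition Aop :: "nat \<Rightarrow> (nat \<Rightarrow> complex) \<Rightarrow> (nat \<Rightarrow> complex) \<Rightarrow> real \<Rightarrow>
                   (nat \<Rightarrow> nat \<Rightarrow> complex) \<Rightarrow> nat \<Rightarrow> nat \<Rightarrow> complex" where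
  "Aop p lam al x a = (\<lambda>n i. a n i + Hop p lam al x a n i)"

text \<open>B_{Omega,K}: E + Htilde(x) is a well-defined operator on m, bijective on m,
  and its inverse has operator norm (w.r.t. the sup norm) at most K.\<close>
definition BOK :: "nat \<Rightarrow> real \<Rightarrow> real \<Rightarrow> (nat \<Rightarrow> complex) \<Rightarrow> (nat \<Rightarrow> complex) \<Rightarrow> bool" where
  "BOK p \<Omega> K lam al \<longleftrightarrow> BOmega p \<Omega> lam al \<and>
     (\<forall>x\<in>{0..pi}.
        (\<forall>a\<in>msp. \<forall>n i. n \<ge> 1 \<longrightarrow> i \<le> 1 \<longrightarrow>
            summable (\<lambda>k. \<Sum>j<2. Hm p lam al x n (Suc k) i j * a (Suc k) j)) \<and>
        bij_betw (Aop p lam al x) msp msp \<and>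
        (\<forall>f\<in>msp. \<forall>B. (\<forall>n i. cmod (f n i) \<le> B) \<longrightarrow>
            (\<forall>n i. cmod (the_inv_into msp (Aop p lam al x) f n i) \<le> K * B)))"

definition psi :: "nat \<Rightarrow> (nat \<Rightarrow> complex) \<Rightarrow> (nat \<Rightarrow> complex) \<Rightarrow> real \<Rightarrow> nat \<Rightarrow> nat \<Rightarrow> complex" where
  "psi p lam al x = the_inv_into msp (Aop p lam al x) (psit p lam x)"

definition gterm :: "nat \<Rightarrow> (nat \<Rightarrow> complex) \<Rightarrow> (nat \<Rightarrow> complex) \<Rightarrow> real \<Rightarrow> nat \<Rightarrow> nat \<Rightarrow> nat \<Rightarrow> complex" where
  "gterm p lam al x n i k =
     (\<Sum>j<2. Qm p lam al x n k i j * (\<Sum>l<2. Tinv p lam k j l * psi p lam al x k l))"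

definition g :: "nat \<Rightarrow> (nat \<Rightarrow> complex) \<Rightarrow> (nat \<Rightarrow> complex) \<Rightarrow> real \<Rightarrow> nat \<Rightarrow> nat \<Rightarrow> complex" where
  "g p lam al x n i = (\<Sum>k. gterm p lam al x n i (Suc k))"

end

theory Submission
  imports Defs
begin

(* Since psit is bounded by pi exp (Omega pi) on [0, pi] and the inverse of E + H has norm at
   most K, psi is uniformly bounded.  The equation (E + H) psi = psit says H psi = psit - psi =: w,
   and the rows of T_n give g_n1 = w_n1 and g_n0 = rhohat_n w_n0 + w_n1; this bounds g.

   For summability, g_ni(x) is the integral over [0, x] of cos (rho_ni t) F(t), where F is a
   series of cosines built from psi.  Expanding cos (rho_k t) around cos (rhot_k t) to second
   order splits F into a uniformly bounded part, a cosine series and t times a sine series, the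
   two series having coefficients O(xi_k); by orthogonality F is bounded in L2(0, pi).  Bessel's
   inequality for the system cos ((n - p - 1) t) then gives the l2 bound for g_n1, hence for g_n0.
   In g_n0 - g_n1 the second-order remainder contributes O(xi_n^2), and the first-order term is
   rhohat_n times a sine moment of t F, which is square summable by Bessel again; AM-GM makes the
   product summable.  All estimates are proved for partial sums of F and pass to the limit. *)

section \<open>The cosine in a horizontal strip\<close>

lemma cmod_cos_le_exp_strip:
  fixes z :: complex assumes "\<bar>Im z\<bar> \<le> Y" shows "cmod (cos z) \<le> exp Y"
  using cmod_cos_le_exp[of 1 z] assms by (simp add: order_trans)

lemma cmod_sin_le_exp_strip:
  fixes z :: complex assumes "\<bar>Im z\<bar> \<le> Y" shows "cmod (sin z) \<le> exp Y"
  using cmod_sin_le_exp[of 1 z] assms by (simp add: order_trans)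

lemma convex_horizontal_strip: "convex {z :: complex. \<bar>Im z\<bar> \<le> Y}"
proof -
  have "{z :: complex. \<bar>Im z\<bar> \<le> Y} = {z. Im z \<le> Y} \<inter> {z. Im z \<ge> -Y}"
    by auto
  then show ?thesis
    using convex_Int[OF convex_halfspace_Im_le convex_halfspace_Im_ge] by metis
qed

lemma cmod_cos_diff_le_strip:
  fixes z w :: complex assumes "\<bar>Im z\<bar> \<le> Y" "\<bar>Im w\<bar> \<le> Y"
  shows "cmod (cos z - cos w) \<le> exp Y * cmod (z - w)"
proof -
  let ?f = "\<lambda>(i::nat) u. if i = 0 then cos u else - sin u"
  have "cmod (?f 0 z - (\<Sum>i\<le>0. ?f i w * (z - w) ^ i / fact i)) \<le> exp Y * cmod (z - w) ^ Suc 0 / fact 0"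
    by (rule complex_Taylor[OF convex_horizontal_strip])
      (use assms in \<open>auto intro!: derivative_eq_intros cmod_sin_le_exp_strip\<close>)
  then show ?thesis by simp
qed

lemma cmod_cos_linear_remainder_le_strip:
  fixes z w :: complex assumes "\<bar>Im z\<bar> \<le> Y" "\<bar>Im w\<bar> \<le> Y"
  shows "cmod (cos z - cos w + sin w * (z - w)) \<le> exp Y * (cmod (z - w))\<^sup>2"
proof -
  let ?f = "\<lambda>(i::nat) u. if i = 0 then cos u else if i = 1 then - sin u else - cos u"
  have "cmod (?f 0 z - (\<Sum>i\<le>1. ?f i w * (z - w) ^ i / fact i)) \<le> exp Y * cmod (z - w) ^ Suc 1 / fact 1"
  proof (rule complex_Taylor[OF convex_horizontal_strip])
    fix i :: nat and u :: complex assume "i \<le> 1"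
    then show "(?f i has_field_derivative ?f (Suc i) u) (at u within {z. \<bar>Im z\<bar> \<le> Y})"
      by (cases "i = 0") (auto intro!: derivative_eq_intros)
  qed (use assms in \<open>auto intro: cmod_cos_le_exp_strip\<close>)
  then show ?thesis by (simp add: algebra_simps power2_eq_square)
qed

section \<open>Orthogonality on [0, pi] and Bessel's inequality\<close>

lemma integral_cos_int_0_pi:
  fixes k :: int
  shows "integral {0..pi} (\<lambda>t. cos (of_int k * t)) = (if k = 0 then pi else 0)"
proof (cases "k = 0")
  case False
  have "((\<lambda>t. cos (of_int k * t)) has_integral sin (of_int k * pi) / of_int k - sin (of_int k * 0) / of_int k) {0..pi}"
    by (rule fundamental_theorem_of_calculus)
      (use False in \<open>auto simp flip: has_real_derivative_iff_has_vector_derivative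
                          intro!: derivative_eq_intros\<close>)
  then show ?thesis using False by (simp add: integral_unique mult.commute)
qed simp

lemma integral_cos_mult_cos_0_pi:
  fixes m m' :: nat assumes "m \<ge> 1" "m' \<ge> 1"
  shows "integral {0..pi} (\<lambda>t. cos (real m * t) * cos (real m' * t)) = (if m = m' then pi / 2 else 0)"
proof -
  have "cos (real m * t) * cos (real m' * t) =
      cos (of_int (int m - int m') * t) / 2 + cos (of_int (int m + int m') * t) / 2" for t
    by (simp add: cos_diff cos_add algebra_simps flip: add_divide_distrib)
  then have "integral {0..pi} (\<lambda>t. cos (real m * t) * cos (real m' * t)) =
      integral {0..pi} (\<lambda>t. cos (of_int (int m - int m') * t)) / 2
      + integral {0..pi} (\<lambda>t. cos (of_int (int m + int m') * t)) / 2"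
    by (simp add: integral_add integrable_continuous_interval continuous_intros)
  also have "\<dots> = (if m = m' then pi else 0) / 2 + 0 / 2"
    unfolding integral_cos_int_0_pi using assms by simp
  finally show ?thesis by (cases "m = m'") auto
qed

lemma integral_sin_mult_sin_0_pi:
  fixes m m' :: nat assumes "m \<ge> 1" "m' \<ge> 1"
  shows "integral {0..pi} (\<lambda>t. sin (real m * t) * sin (real m' * t)) = (if m = m' then pi / 2 else 0)"
proof -
  have "sin (real m * t) * sin (real m' * t) =
      cos (of_int (int m - int m') * t) / 2 - cos (of_int (int m + int m') * t) / 2" for t
    by (simp add: cos_diff cos_add algebra_simps flip: diff_divide_distrib)
  then have "integral {0..pi} (\<lambda>t. sin (real m * t) * sin (real m' * t)) =
      integral {0..pi} (\<lambda>t. cos (of_int (int m - int m') * t)) / 2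
      - integral {0..pi} (\<lambda>t. cos (of_int (int m + int m') * t)) / 2"
    by (simp add: integral_diff integrable_continuous_interval continuous_intros)
  also have "\<dots> = (if m = m' then pi else 0) / 2 - 0 / 2"
    unfolding integral_cos_int_0_pi using assms by simp
  finally show ?thesis by (cases "m = m'") auto
qed

definition orthogonal_system_0_pi :: "('i \<Rightarrow> real \<Rightarrow> real) \<Rightarrow> 'i set \<Rightarrow> bool" where
  "orthogonal_system_0_pi \<phi> I \<longleftrightarrow>
     (\<forall>m\<in>I. continuous_on {0..pi} (\<phi> m)) \<and>
     (\<forall>m\<in>I. \<forall>m'\<in>I. integral {0..pi} (\<lambda>t. \<phi> m t * \<phi> m' t) = (if m = m' then pi / 2 else 0))"

lemma orthogonal_system_cos:
  assumes "inj_on f I" and "\<And>m. m \<in> I \<Longrightarrow> f m \<ge> 1"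
  shows "orthogonal_system_0_pi (\<lambda>m t. cos (real (f m) * t)) I"
  using assms integral_cos_mult_cos_0_pi
  by (auto simp: orthogonal_system_0_pi_def inj_on_eq_iff intro: continuous_intros)

lemma orthogonal_system_sin:
  assumes "inj_on f I" and "\<And>m. m \<in> I \<Longrightarrow> f m \<ge> 1"
  shows "orthogonal_system_0_pi (\<lambda>m t. sin (real (f m) * t)) I"
  using assms integral_sin_mult_sin_0_pi
  by (auto simp: orthogonal_system_0_pi_def inj_on_eq_iff intro: continuous_intros)

lemma orthogonal_system_cos_shift:
  "I \<subseteq> {p+2..} \<Longrightarrow> orthogonal_system_0_pi (\<lambda>k t. cos (real (k - p - 1) * t)) I"
  by (rule orthogonal_system_cos) (auto simp: inj_on_def)

lemma orthogonal_system_sin_shift: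
  "I \<subseteq> {p+2..} \<Longrightarrow> orthogonal_system_0_pi (\<lambda>k t. sin (real (k - p - 1) * t)) I"
  by (rule orthogonal_system_sin) (auto simp: inj_on_def)

lemma integral_sum_orthogonal_sq:
  fixes a :: "'i \<Rightarrow> real"
  assumes orth: "orthogonal_system_0_pi \<phi> I" and I: "finite I"
  shows "integral {0..pi} (\<lambda>t. (\<Sum>m\<in>I. a m * \<phi> m t)\<^sup>2) = pi / 2 * (\<Sum>m\<in>I. (a m)\<^sup>2)"
proof -
  have cont: "m \<in> I \<Longrightarrow> continuous_on {0..pi} (\<phi> m)" for m
    using orth by (simp add: orthogonal_system_0_pi_def)
  have "(\<Sum>m\<in>I. a m * \<phi> m t)\<^sup>2 = (\<Sum>m\<in>I. \<Sum>m'\<in>I. (a m * a m') * (\<phi> m t * \<phi> m' t))" for t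
    by (simp add: power2_eq_square sum_product algebra_simps)
  then have "integral {0..pi} (\<lambda>t. (\<Sum>m\<in>I. a m * \<phi> m t)\<^sup>2) =
      (\<Sum>m\<in>I. \<Sum>m'\<in>I. (a m * a m') * integral {0..pi} (\<lambda>t. \<phi> m t * \<phi> m' t))"
    by (simp add: integral_sum[OF I] integrable_continuous_interval continuous_intros cont)
  also have "\<dots> = (\<Sum>m\<in>I. \<Sum>m'\<in>I. if m = m' then (a m * a m') * (pi / 2) else 0)"
    using orth by (intro sum.cong refl) (simp add: orthogonal_system_0_pi_def)
  also have "\<dots> = (\<Sum>m\<in>I. (a m)\<^sup>2 * (pi / 2))"
    by (simp add: power2_eq_square I)
  finally show ?thesis by (simp add: sum_distrib_left sum_distrib_right algebra_simps)
qed

lemma integral_cmod_sum_orthogonal_sq: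
  fixes c :: "'i \<Rightarrow> complex"
  assumes orth: "orthogonal_system_0_pi \<phi> I" and I: "finite I"
  shows "integral {0..pi} (\<lambda>t. (cmod (\<Sum>m\<in>I. c m * of_real (\<phi> m t)))\<^sup>2) = pi / 2 * (\<Sum>m\<in>I. (cmod (c m))\<^sup>2)"
proof -
  have cont: "m \<in> I \<Longrightarrow> continuous_on {0..pi} (\<phi> m)" for m
    using orth by (simp add: orthogonal_system_0_pi_def)
  have "(cmod (\<Sum>m\<in>I. c m * of_real (\<phi> m t)))\<^sup>2 =
      (\<Sum>m\<in>I. Re (c m) * \<phi> m t)\<^sup>2 + (\<Sum>m\<in>I. Im (c m) * \<phi> m t)\<^sup>2" for t
    by (simp add: cmod_power2 Re_sum Im_sum)
  then have "integral {0..pi} (\<lambda>t. (cmod (\<Sum>m\<in>I. c m * of_real (\<phi> m t)))\<^sup>2) =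
      integral {0..pi} (\<lambda>t. (\<Sum>m\<in>I. Re (c m) * \<phi> m t)\<^sup>2)
      + integral {0..pi} (\<lambda>t. (\<Sum>m\<in>I. Im (c m) * \<phi> m t)\<^sup>2)"
    by (simp add: integral_add integrable_continuous_interval continuous_intros cont)
  then show ?thesis
    by (simp add: integral_sum_orthogonal_sq[OF orth I] cmod_power2 sum.distrib algebra_simps)
qed

lemma Bessel_inequality_0_x:
  fixes G :: "real \<Rightarrow> complex"
  assumes orth: "orthogonal_system_0_pi \<phi> I" and I: "finite I"
    and x: "x \<in> {0..pi}" and G: "continuous_on {0..pi} G"
  shows "(\<Sum>m\<in>I. (cmod (integral {0..x} (\<lambda>t. of_real (\<phi> m t) * G t)))\<^sup>2)
           \<le> pi / 2 * integral {0..pi} (\<lambda>t. (cmod (G t))\<^sup>2)"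
proof -
  define c where "c m = integral {0..x} (\<lambda>t. of_real (\<phi> m t) * G t)" for m
  define T where "T = (\<Sum>m\<in>I. (cmod (c m))\<^sup>2)"
  define S where "S t = (\<Sum>m\<in>I. cnj (c m) * of_real (\<phi> m t))" for t
  have sub: "{0..x} \<subseteq> {0..pi}" using x by auto
  have cont: "m \<in> I \<Longrightarrow> continuous_on {0..pi} (\<phi> m)" for m
    using orth by (simp add: orthogonal_system_0_pi_def)
  have S: "continuous_on {0..pi} S"
    unfolding S_def by (intro continuous_intros cont)
  note integrable = integrable_continuous_interval continuous_intros
    continuous_on_subset[OF cont sub] continuous_on_subset[OF S sub] continuous_on_subset[OF G sub] S G
  have "of_real T = (\<Sum>m\<in>I. cnj (c m) * c m)"
    unfolding T_def of_real_sum by (intro sum.cong refl) (metis complex_norm_square mult.commute)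
  also have "\<dots> = integral {0..x} (\<lambda>t. S t * G t)"
    unfolding S_def c_def sum_distrib_right
    by (simp add: integral_sum[OF I] integrable mult.assoc flip: integral_mult_right)
  finally have T_eq: "of_real T = integral {0..x} (\<lambda>t. S t * G t)" .
  have "T \<le> cmod (of_real T :: complex)" by simp
  also have "\<dots> \<le> integral {0..x} (\<lambda>t. cmod (S t) * cmod (G t))"
    unfolding T_eq by (intro integral_norm_bound_integral integrable) (simp add: norm_mult)
  \<comment> \<open>AM-GM, weighted so that by Parseval the S-term contributes T / 2\<close>
  also have "\<dots> \<le> integral {0..x} (\<lambda>t. (cmod (S t))\<^sup>2 / pi + pi / 4 * (cmod (G t))\<^sup>2)"
  proof (rule integral_le)
    fix t
    have "0 \<le> (2 * cmod (S t) - pi * cmod (G t))\<^sup>2" by simp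
    then show "cmod (S t) * cmod (G t) \<le> (cmod (S t))\<^sup>2 / pi + pi / 4 * (cmod (G t))\<^sup>2"
      by (simp add: field_simps power2_eq_square)
  qed (intro integrable | simp)+
  also have "\<dots> \<le> integral {0..pi} (\<lambda>t. (cmod (S t))\<^sup>2 / pi + pi / 4 * (cmod (G t))\<^sup>2)"
    by (intro integral_subset_le sub integrable) auto
  also have "\<dots> = integral {0..pi} (\<lambda>t. (cmod (S t))\<^sup>2) / pi + pi / 4 * integral {0..pi} (\<lambda>t. (cmod (G t))\<^sup>2)"
    by (simp add: integral_add integrable)
  also have "integral {0..pi} (\<lambda>t. (cmod (S t))\<^sup>2) = pi / 2 * T"
    unfolding S_def T_def by (simp add: integral_cmod_sum_orthogonal_sq[OF orth I])
  finally show ?thesis unfolding T_def c_def by (simp add: field_simps)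
qed

lemma summable_Suc_if_finite_sums_bounded:
  fixes f :: "nat \<Rightarrow> real"
  assumes nonneg: "\<And>n. f n \<ge> 0" and bound: "\<And>I. finite I \<Longrightarrow> I \<subseteq> {1..} \<Longrightarrow> sum f I \<le> B"
  shows "summable (\<lambda>n. f (Suc n))" and "(\<Sum>n. f (Suc n)) \<le> B"
proof -
  have partial: "(\<Sum>k\<in>A. f (Suc k)) \<le> B" if "finite A" for A
    using bound[of "Suc ` A"] that by (force simp: sum.reindex)
  show "summable (\<lambda>n. f (Suc n))"
    by (rule bounded_imp_summable[where B = B]) (simp_all add: nonneg partial)
  then show "(\<Sum>n. f (Suc n)) \<le> B"
    by (rule suminf_le_const) (simp add: partial)
qed

lemma power2_add3_le: "((a::real) + b + c)\<^sup>2 \<le> 3 * (a\<^sup>2 + b\<^sup>2 + c\<^sup>2)"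
proof -
  have "0 \<le> (a - b)\<^sup>2 + (b - c)\<^sup>2 + (a - c)\<^sup>2" by simp
  then show ?thesis by (simp add: power2_eq_square algebra_simps)
qed

lemma sum_split_low_high:
  fixes M p :: nat
  shows "(\<Sum>k=1..M. f k) = (\<Sum>k\<in>{1..M} \<inter> {..p+1}. f k) + (\<Sum>k=p+2..M. f k)"
proof -
  have "{1..M} - {..p+1} = {p+2..M}" by auto
  then show ?thesis using sum.Int_Diff[of "{1..M}" f "{..p+1}"] by simp
qed

lemma sum_lessThan_2: "(\<Sum>j<2. f j) = f 0 + f (1::nat)"
  by (simp add: numeral_2_eq_2)

lemma sum_mmul_mult: "(\<Sum>j<2. mmul A B i j * v j) = (\<Sum>l<2. A i l * (\<Sum>j<2. B l j * v j))"
  by (simp add: mmul_def sum_lessThan_2 algebra_simps)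

text \<open>The truncated subtraction n - p - 1 vanishes exactly for n \<le> p + 1, so this covers
  both branches of rhot.\<close>

lemma rhot_eq_of_nat: "rhot p n = of_nat (n - p - 1)"
  by (simp add: rhot_def of_nat_diff)

lemma cos_rhot_mult: "cos (rhot p n * of_real t) = of_real (cos (real (n - p - 1) * t))"
  by (simp add: rhot_eq_of_nat flip: cos_of_real)

lemma sin_rhot_mult: "sin (rhot p n * of_real t) = of_real (sin (real (n - p - 1) * t))"
  by (simp add: rhot_eq_of_nat flip: sin_of_real)

lemma cmod_alphat_le_1: "cmod (alphat p n) \<le> 1"
  using pi_gt3 by (auto simp: alphat_def norm_divide)

lemma xi_nonneg: "0 \<le> xi p lam al n"
  by (simp add: xi_def)

lemma cmod_rhohat_le_xi: "cmod (rhohat p lam n) \<le> xi p lam al n"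
  by (simp add: xi_def rhohat_def)

lemma cmod_alpha_diff_le_xi: "cmod (al n - alphat p n) \<le> xi p lam al n"
  by (simp add: xi_def)

locale BOK_constants =
  fixes p :: nat and \<Omega> K :: real
  assumes Omega_pos: "0 < \<Omega>" and K_pos: "0 < K"
begin

definition "cos_bound = exp (\<Omega> * pi)"
definition "psit_bound = pi * cos_bound"
definition "psi_bound = K * psit_bound"
definition "w_bound = psit_bound + psi_bound"
definition "F_coeff_bound = (2 + \<Omega>) * psi_bound"

definition "F_unif_bound =
  real (p + 1) * F_coeff_bound * \<Omega> + F_coeff_bound * cos_bound * pi * \<Omega>\<^sup>2 + psi_bound * cos_bound * pi\<^sup>2 * \<Omega>\<^sup>2"

definition "F_L2_bound =
  3 * (pi * F_unif_bound\<^sup>2 + pi / 2 * (F_coeff_bound\<^sup>2 * \<Omega>\<^sup>2) + pi\<^sup>2 * (pi / 2 * (psi_bound\<^sup>2 * \<Omega>\<^sup>2)))"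

definition "F_L1_bound = (pi + F_L2_bound) / 2"

definition "g1_l2_bound = real (p + 1) * F_L1_bound\<^sup>2 + pi / 2 * F_L2_bound"

definition "gdiff_l1_bound =
  cos_bound * pi\<^sup>2 * F_L1_bound * \<Omega>\<^sup>2 + (\<Omega>\<^sup>2 + pi / 2 * (pi\<^sup>2 * F_L2_bound)) / 2"

definition "g_l2_bound = 2 * w_bound\<^sup>2 * \<Omega>\<^sup>2 + 2 * g1_l2_bound"

definition "uniform_bound =
  max psi_bound (max ((\<Omega> + 1) * w_bound) (max (sqrt g_l2_bound) gdiff_l1_bound))"

lemma cos_bound_ge_1: "1 \<le> cos_bound"
  using Omega_pos by (simp add: cos_bound_def)

lemma psit_bound_ge_pi: "pi \<le> psit_bound"
  using cos_bound_ge_1 by (simp add: psit_bound_def)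

lemma psi_bound_nonneg: "0 \<le> psi_bound"
  using order_trans[OF pi_ge_zero psit_bound_ge_pi] K_pos unfolding psi_bound_def by simp

lemma w_bound_nonneg: "0 \<le> w_bound"
  using order_trans[OF pi_ge_zero psit_bound_ge_pi] psi_bound_nonneg by (simp add: w_bound_def)

lemma F_coeff_bound_nonneg: "0 \<le> F_coeff_bound"
  using psi_bound_nonneg Omega_pos by (simp add: F_coeff_bound_def)

lemma F_L2_bound_nonneg: "0 \<le> F_L2_bound"
  unfolding F_L2_bound_def by (intro mult_nonneg_nonneg add_nonneg_nonneg) auto

lemma g1_l2_bound_le: "g1_l2_bound \<le> g_l2_bound"
proof -
  have "0 \<le> g1_l2_bound"
    using F_L2_bound_nonneg by (simp add: g1_l2_bound_def)
  then show ?thesis by (simp add: g_l2_bound_def)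
qed

lemma le_uniform_bound:
  "psi_bound \<le> uniform_bound" "(\<Omega> + 1) * w_bound \<le> uniform_bound"
  "sqrt g_l2_bound \<le> uniform_bound" "gdiff_l1_bound \<le> uniform_bound"
  by (simp_all add: uniform_bound_def)

end

section \<open>Estimates at a point x of [0, pi] for data in B_Omega_K\<close>

locale BOK_point = BOK_constants +
  fixes lam al :: "nat \<Rightarrow> complex" and x :: real
  assumes in_BOK: "BOK p \<Omega> K lam al" and x_in: "x \<in> {0..pi}"
begin

abbreviation "\<delta> n \<equiv> rhohat p lam n"

abbreviation "\<psi> \<equiv> psi p lam al x"

abbreviation "w n i \<equiv> psit p lam x n i - \<psi> n i"

lemma x_nonneg: "0 \<le> x" and x_le_pi: "x \<le> pi"
  using x_in by auto

lemma in_BOmega: "BOmega p \<Omega> lam al"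
  using in_BOK unfolding BOK_def by (rule conjunct1)

lemma sum_xi_sq_le:
  assumes I: "finite I" "I \<subseteq> {1..}"
  shows "(\<Sum>n\<in>I. (xi p lam al n)\<^sup>2) \<le> \<Omega>\<^sup>2"
proof -
  have summable: "summable (\<lambda>n. (xi p lam al (Suc n))\<^sup>2)"
    and "sqrt (\<Sum>n. (xi p lam al (Suc n))\<^sup>2) \<le> \<Omega>"
    using in_BOmega by (simp_all add: BOmega_def)
  then have suminf_le: "(\<Sum>n. (xi p lam al (Suc n))\<^sup>2) \<le> \<Omega>\<^sup>2"
    by (simp add: sqrt_le_D)
  define J where "J = (\<lambda>n. n - 1) ` I"
  have "Suc ` J = (\<lambda>n. Suc (n - 1)) ` I"
    by (simp add: J_def image_image)
  also have "\<dots> = (\<lambda>n. n) ` I"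
    by (rule image_cong) (use I(2) in auto)
  finally have "I = Suc ` J" by simp
  then have "(\<Sum>n\<in>I. (xi p lam al n)\<^sup>2) = (\<Sum>k\<in>J. (xi p lam al (Suc k))\<^sup>2)"
    by (simp add: sum.reindex)
  also have "\<dots> \<le> (\<Sum>n. (xi p lam al (Suc n))\<^sup>2)"
    using I(1) by (intro sum_le_suminf summable) (auto simp: J_def)
  finally show ?thesis using suminf_le by linarith
qed

lemma sum_xi_sq_mult_le:
  "finite I \<Longrightarrow> I \<subseteq> {1..} \<Longrightarrow> 0 \<le> c \<Longrightarrow> (\<Sum>k\<in>I. c * (xi p lam al k)\<^sup>2) \<le> c * \<Omega>\<^sup>2"
  by (simp add: mult_left_mono sum_xi_sq_le flip: sum_distrib_left)

lemma xi_le: "n \<ge> 1 \<Longrightarrow> xi p lam al n \<le> \<Omega>"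
proof -
  assume "n \<ge> 1"
  then have "(xi p lam al n)\<^sup>2 \<le> \<Omega>\<^sup>2"
    using sum_xi_sq_le[of "{n}"] by simp
  then show ?thesis by (rule power2_le_imp_le) (use Omega_pos in simp)
qed

lemma cmod_rhohat_le: "n \<ge> 1 \<Longrightarrow> cmod (\<delta> n) \<le> \<Omega>"
  using cmod_rhohat_le_xi xi_le order_trans by blast

lemma cmod_al_le: "n \<ge> 1 \<Longrightarrow> cmod (al n) \<le> 1 + \<Omega>"
  using norm_triangle_sub[of "al n" "alphat p n"] cmod_alphat_le_1[of p n]
    cmod_alpha_diff_le_xi[of al n p lam] xi_le[of n]
  by linarith

lemma abs_Im_rho_mult_le:
  assumes "n \<ge> 1" "t \<in> {0..pi}"
  shows "\<bar>Im (rho lam n * of_real t)\<bar> \<le> \<Omega> * pi"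
proof -
  have "\<bar>Im (rho lam n * of_real t)\<bar> = \<bar>Im (\<delta> n)\<bar> * t"
    using assms(2) by (simp add: rhohat_def rhot_eq_of_nat abs_mult)
  also have "\<dots> \<le> \<Omega> * pi"
    using cmod_rhohat_le[OF assms(1)] abs_Im_le_cmod[of "\<delta> n"] assms(2) Omega_pos
    by (intro mult_mono) auto
  finally show ?thesis .
qed

lemma cmod_rho_rhot_mult_diff_le:
  "t \<in> {0..pi} \<Longrightarrow> cmod (rho lam n * of_real t - rhot p n * of_real t) \<le> pi * cmod (\<delta> n)"
proof -
  assume t: "t \<in> {0..pi}"
  have "rho lam n * of_real t - rhot p n * of_real t = \<delta> n * of_real t"
    by (simp add: rhohat_def algebra_simps)
  then show ?thesis
    using t mult_right_mono[of t pi "cmod (\<delta> n)"] by (simp add: norm_mult mult.commute)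
qed

lemma cmod_cos_rho_diff_le:
  assumes "n \<ge> 1" "t \<in> {0..pi}"
  shows "cmod (cos (rho lam n * of_real t) - cos (rhot p n * of_real t)) \<le> cos_bound * pi * cmod (\<delta> n)"
proof -
  have "cmod (cos (rho lam n * of_real t) - cos (rhot p n * of_real t))
      \<le> cos_bound * cmod (rho lam n * of_real t - rhot p n * of_real t)"
    unfolding cos_bound_def using abs_Im_rho_mult_le[OF assms] Omega_pos
    by (intro cmod_cos_diff_le_strip) (auto simp: rhot_eq_of_nat)
  also have "\<dots> \<le> cos_bound * (pi * cmod (\<delta> n))"
    using cos_bound_ge_1 by (intro mult_left_mono cmod_rho_rhot_mult_diff_le assms(2)) auto
  finally show ?thesis by (simp add: mult.assoc)
qed

definition cos_remainder :: "nat \<Rightarrow> real \<Rightarrow> complex" where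
  "cos_remainder n t = cos (rho lam n * of_real t) - cos (rhot p n * of_real t)
     + \<delta> n * of_real t * sin (rhot p n * of_real t)"

lemma cmod_cos_remainder_le:
  assumes "n \<ge> 1" "t \<in> {0..pi}"
  shows "cmod (cos_remainder n t) \<le> cos_bound * pi\<^sup>2 * (xi p lam al n)\<^sup>2"
proof -
  have eq: "cos_remainder n t = cos (rho lam n * of_real t) - cos (rhot p n * of_real t)
      + sin (rhot p n * of_real t) * (rho lam n * of_real t - rhot p n * of_real t)"
    by (simp add: cos_remainder_def rhohat_def algebra_simps)
  have "cmod (cos_remainder n t) \<le> cos_bound * (cmod (rho lam n * of_real t - rhot p n * of_real t))\<^sup>2"
    unfolding eq cos_bound_def using abs_Im_rho_mult_le[OF assms] Omega_pos
    by (intro cmod_cos_linear_remainder_le_strip) (auto simp: rhot_eq_of_nat)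
  also have "\<dots> \<le> cos_bound * (pi * xi p lam al n)\<^sup>2"
    using cos_bound_ge_1 cmod_rho_rhot_mult_diff_le[OF assms(2), of n] cmod_rhohat_le_xi[of p lam n al]
    by (intro mult_left_mono power_mono) (auto intro: order_trans)
  finally show ?thesis by (simp add: power_mult_distrib mult.assoc)
qed

lemma cmod_psit_le: "cmod (psit p lam x n i) \<le> psit_bound"
proof -
  have "cmod (cos (rhot p n * of_real x)) \<le> 1"
    by (simp add: cos_rhot_mult)
  then have cos_rhot: "cmod (cos (rhot p n * of_real x)) \<le> psit_bound"
    using psit_bound_ge_pi pi_gt3 by linarith
  have sin_rhot: "cmod (- of_real x * sin (rhot p n * of_real x)) \<le> psit_bound"
  proof -
    have "cmod (- of_real x * sin (rhot p n * of_real x)) \<le> x * 1"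
      using x_nonneg by (simp add: sin_rhot_mult norm_mult mult_left_le)
    then show ?thesis using x_le_pi psit_bound_ge_pi by linarith
  qed
  have quotient: "cmod ((cos (rho lam n * of_real x) - cos (rhot p n * of_real x)) / \<delta> n) \<le> psit_bound"
    if "n \<ge> 1" "\<delta> n \<noteq> 0"
    using cmod_cos_rho_diff_le[OF that(1) x_in] that(2)
    by (simp add: norm_divide divide_le_eq psit_bound_def mult.commute)
  show ?thesis
    using cos_rhot sin_rhot quotient order_trans[OF pi_ge_zero psit_bound_ge_pi]
    by (auto simp: psit_def Tm_def rhoi_def sum_lessThan_2 diff_divide_distrib)
qed

lemma psit_in_msp: "psit p lam x \<in> msp"
proof -
  have "\<forall>n i. n = 0 \<or> i > 1 \<longrightarrow> psit p lam x n i = 0"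
    by (auto simp: psit_def)
  moreover have "\<exists>B. \<forall>n i. cmod (psit p lam x n i) \<le> B"
    using cmod_psit_le by blast
  ultimately show ?thesis
    unfolding msp_def by simp
qed

lemma
  shows H_row_summable: "a \<in> msp \<Longrightarrow> n \<ge> 1 \<Longrightarrow> i \<le> 1 \<Longrightarrow>
      summable (\<lambda>k. \<Sum>j<2. Hm p lam al x n (Suc k) i j * a (Suc k) j)"
    and bij_Aop: "bij_betw (Aop p lam al x) msp msp"
    and cmod_inverse_le: "f \<in> msp \<Longrightarrow> \<forall>n i. cmod (f n i) \<le> B \<Longrightarrow>
      cmod (the_inv_into msp (Aop p lam al x) f n i) \<le> K * B"
  using in_BOK x_in unfolding BOK_def by blast+

lemma psi_in_msp: "\<psi> \<in> msp"
  unfolding psi_def using bij_Aop psit_in_msp by (metis bij_betw_def the_inv_into_into order_refl)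

lemma Aop_psi: "Aop p lam al x \<psi> = psit p lam x"
  unfolding psi_def using bij_Aop psit_in_msp by (simp add: bij_betw_def f_the_inv_into_f)

lemma cmod_psi_le: "cmod (\<psi> n i) \<le> psi_bound"
  unfolding psi_def psi_bound_def using psit_in_msp cmod_psit_le by (blast intro: cmod_inverse_le)

lemma cmod_w_le: "cmod (w n i) \<le> w_bound"
  using norm_triangle_ineq4[of "psit p lam x n i" "\<psi> n i"] cmod_psit_le[of n i] cmod_psi_le[of n i]
  by (simp add: w_bound_def)

abbreviation "H_psi n k i \<equiv> \<Sum>j<2. Hm p lam al x n k i j * \<psi> k j"

lemma H_psi_sums: "n \<ge> 1 \<Longrightarrow> i \<le> 1 \<Longrightarrow> (\<lambda>k. H_psi n (Suc k) i) sums w n i"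
proof -
  assume n: "n \<ge> 1" and i: "i \<le> 1"
  have "\<psi> n i + Hop p lam al x \<psi> n i = psit p lam x n i"
    using fun_cong[OF fun_cong[OF Aop_psi, of n], of i] by (simp add: Aop_def)
  then have "(\<Sum>k. H_psi n (Suc k) i) = w n i"
    using n i by (simp add: Hop_def algebra_simps)
  with H_row_summable[OF psi_in_msp n i] show ?thesis
    by (simp add: summable_sums_iff)
qed

lemma gterm_eq_mmul: "gterm p lam al x n i k = (\<Sum>j<2. mmul (Qm p lam al x n k) (Tinv p lam k) i j * \<psi> k j)"
  unfolding gterm_def sum_mmul_mult ..

lemma H_psi_row1: "H_psi n k 1 = gterm p lam al x n 1 k"
proof (cases "\<delta> n = 0")
  case True
  then show ?thesis
    by (simp add: Hm_def sum_mmul_mult Hd_def gterm_def)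
next
  case False
  then have "H_psi n k 1 = (\<Sum>l<2. Tm p lam n 1 l * gterm p lam al x n l k)"
    by (simp add: Hm_def sum_mmul_mult gterm_eq_mmul)
  then show ?thesis by (simp add: Tm_def sum_lessThan_2)
qed

lemma H_psi_row0:
  "\<delta> n \<noteq> 0 \<Longrightarrow> H_psi n k 0 = (gterm p lam al x n 0 k - gterm p lam al x n 1 k) / \<delta> n"
  by (simp add: Hm_def sum_mmul_mult gterm_eq_mmul Tm_def sum_lessThan_2 diff_divide_distrib)

lemma gterm_rows_eq: "\<delta> n = 0 \<Longrightarrow> gterm p lam al x n 0 k = gterm p lam al x n 1 k"
  by (simp add: gterm_def Qm_def Qe_def rhoi_def rhohat_def)

lemma gterm1_sums: "n \<ge> 1 \<Longrightarrow> (gterm p lam al x n 1 \<circ> Suc) sums w n 1"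
  using H_psi_sums[of n 1] unfolding H_psi_row1 by (simp add: o_def)

lemma gterm0_sums: "n \<ge> 1 \<Longrightarrow> (gterm p lam al x n 0 \<circ> Suc) sums (\<delta> n * w n 0 + w n 1)"
proof (cases "\<delta> n = 0")
  case True
  then show "n \<ge> 1 \<Longrightarrow> ?thesis"
    using gterm1_sums by (simp add: gterm_rows_eq o_def)
next
  case False
  assume n: "n \<ge> 1"
  have "(\<lambda>k. \<delta> n * H_psi n (Suc k) 0 + gterm p lam al x n 1 (Suc k)) sums (\<delta> n * w n 0 + w n 1)"
    using sums_add[OF sums_mult[OF H_psi_sums[OF n, of 0]] gterm1_sums[OF n]] by (simp add: o_def)
  then show ?thesis
    using False by (simp add: H_psi_row0 o_def)
qed

lemma g1_eq: "n \<ge> 1 \<Longrightarrow> g p lam al x n 1 = w n 1"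
  using gterm1_sums by (simp add: g_def sums_iff o_def)

lemma g0_eq: "n \<ge> 1 \<Longrightarrow> g p lam al x n 0 = \<delta> n * w n 0 + w n 1"
  using gterm0_sums by (simp add: g_def sums_iff o_def)

lemma summable_gterm: "n \<ge> 1 \<Longrightarrow> i \<le> 1 \<Longrightarrow> summable (gterm p lam al x n i \<circ> Suc)"
  using gterm0_sums gterm1_sums by (auto simp: sums_iff le_Suc_eq)

lemma partial_sums_gterm_tendsto:
  "n \<ge> 1 \<Longrightarrow> i \<le> 1 \<Longrightarrow> (\<lambda>M. \<Sum>k<M. gterm p lam al x n i (Suc k)) \<longlonglongrightarrow> g p lam al x n i"
  using summable_LIMSEQ[OF summable_gterm] by (simp add: g_def o_def)

lemma cmod_g1_le: "n \<ge> 1 \<Longrightarrow> cmod (g p lam al x n 1) \<le> w_bound"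
  using g1_eq cmod_w_le by metis

lemma cmod_g0_le: "n \<ge> 1 \<Longrightarrow> cmod (g p lam al x n 0) \<le> xi p lam al n * w_bound + cmod (g p lam al x n 1)"
proof -
  assume n: "n \<ge> 1"
  have "cmod (g p lam al x n 0) \<le> cmod (\<delta> n) * cmod (w n 0) + cmod (w n 1)"
    unfolding g0_eq[OF n] by (metis norm_triangle_ineq norm_mult)
  moreover have "cmod (\<delta> n) * cmod (w n 0) \<le> xi p lam al n * w_bound"
    by (intro mult_mono cmod_rhohat_le_xi cmod_w_le xi_nonneg) simp
  ultimately show ?thesis unfolding g1_eq[OF n] by linarith
qed

lemma cmod_g_le: "n \<ge> 1 \<Longrightarrow> i \<le> 1 \<Longrightarrow> cmod (g p lam al x n i) \<le> (\<Omega> + 1) * w_bound"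
proof -
  assume n: "n \<ge> 1" and i: "i \<le> 1"
  have "xi p lam al n * w_bound \<le> \<Omega> * w_bound" and "0 \<le> \<Omega> * w_bound"
    using xi_le[OF n] w_bound_nonneg Omega_pos by (simp_all add: mult_right_mono)
  then have "cmod (g p lam al x n 0) \<le> (\<Omega> + 1) * w_bound" "cmod (g p lam al x n 1) \<le> (\<Omega> + 1) * w_bound"
    using cmod_g0_le[OF n] cmod_g1_le[OF n] by (simp_all add: distrib_right)
  then show ?thesis using i by (cases i) auto
qed

subsection \<open>The cosine density F\<close>

text \<open>\<delta> k * \<psi> k 0 + \<psi> k 1 and \<psi> k 1 are the two components of T_k^{-1} \<psi>_k.\<close>

definition F_term :: "nat \<Rightarrow> real \<Rightarrow> complex" where
  "F_term k t = al k * (\<delta> k * \<psi> k 0 + \<psi> k 1) * cos (rho lam k * of_real t)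
     - alphat p k * \<psi> k 1 * cos (rhot p k * of_real t)"

definition F :: "nat \<Rightarrow> real \<Rightarrow> complex" where
  "F M t = (\<Sum>k=1..M. F_term k t)"

lemma continuous_on_F: "continuous_on S (F M)"
  unfolding F_def F_term_def by (intro continuous_intros)

lemma gterm_eq_integral:
  "gterm p lam al x n i k = integral {0..x} (\<lambda>t. cos (rhoi p lam n i * of_real t) * F_term k t)"
proof -
  let ?c = "\<lambda>r t. cos (rhoi p lam n i * of_real t) * cos (r * of_real t)"
  have "(\<lambda>t. cos (rhoi p lam n i * of_real t) * F_term k t) =
      (\<lambda>t. al k * (\<delta> k * \<psi> k 0 + \<psi> k 1) * ?c (rho lam k) t - alphat p k * \<psi> k 1 * ?c (rhot p k) t)"
    by (auto simp: F_term_def algebra_simps)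
  then have "integral {0..x} (\<lambda>t. cos (rhoi p lam n i * of_real t) * F_term k t) =
      al k * (\<delta> k * \<psi> k 0 + \<psi> k 1) * Dr x (rhoi p lam n i) (rho lam k)
      - alphat p k * \<psi> k 1 * Dr x (rhoi p lam n i) (rhot p k)"
    by (simp add: Dr_def integral_diff integrable_continuous_interval continuous_intros)
  then show ?thesis
    by (simp add: gterm_def Qm_def Qe_def alphai_def rhoi_def Tinv_def sum_lessThan_2 algebra_simps)
qed

lemma sum_gterm_eq_integral:
  "(\<Sum>k<M. gterm p lam al x n i (Suc k)) = integral {0..x} (\<lambda>t. cos (rhoi p lam n i * of_real t) * F M t)"
proof -
  have "(\<Sum>k<M. gterm p lam al x n i (Suc k)) = (\<Sum>k=1..M. gterm p lam al x n i k)"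
    using sum.reindex[of Suc "{..<M}" "gterm p lam al x n i"] by (simp add: image_Suc_lessThan)
  then show ?thesis
    unfolding gterm_eq_integral F_def sum_distrib_left
    by (simp add: integral_sum integrable_continuous_interval continuous_intros F_term_def)
qed

definition F_coeff :: "nat \<Rightarrow> complex" where
  "F_coeff k = al k * \<delta> k * \<psi> k 0 + (al k - alphat p k) * \<psi> k 1"

lemma cmod_F_coeff_le: "k \<ge> 1 \<Longrightarrow> cmod (F_coeff k) \<le> F_coeff_bound * xi p lam al k"
proof -
  assume k: "k \<ge> 1"
  have "cmod (F_coeff k) \<le> cmod (al k) * cmod (\<delta> k) * cmod (\<psi> k 0) + cmod (al k - alphat p k) * cmod (\<psi> k 1)"
    unfolding F_coeff_def by (metis norm_triangle_le norm_mult order_refl)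
  also have "\<dots> \<le> (1 + \<Omega>) * xi p lam al k * psi_bound + xi p lam al k * psi_bound"
    using cmod_al_le[OF k] cmod_rhohat_le_xi cmod_psi_le cmod_alpha_diff_le_xi xi_nonneg Omega_pos
    by (intro add_mono mult_mono) auto
  also have "\<dots> = F_coeff_bound * xi p lam al k"
    by (simp add: F_coeff_bound_def algebra_simps)
  finally show ?thesis .
qed

lemma F_term_split:
  "F_term k t = F_coeff k * cos (rhot p k * of_real t)
     + F_coeff k * (cos (rho lam k * of_real t) - cos (rhot p k * of_real t))
     + alphat p k * \<psi> k 1 * cos_remainder k t
     - of_real t * (alphat p k * \<psi> k 1 * \<delta> k * sin (rhot p k * of_real t))"
  by (simp add: F_term_def F_coeff_def cos_remainder_def algebra_simps)

text \<open>For k \<le> p + 1 the model frequency vanishes; for k \<ge> p + 2 it is k - p - 1 \<ge> 1, and those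
  oscillating terms are controlled in L2 by orthogonality rather than pointwise.\<close>

definition F_bounded_part :: "nat \<Rightarrow> real \<Rightarrow> complex" where
  "F_bounded_part M t = (\<Sum>k\<in>{1..M} \<inter> {..p+1}. F_coeff k)
     + (\<Sum>k=1..M. F_coeff k * (cos (rho lam k * of_real t) - cos (rhot p k * of_real t)))
     + (\<Sum>k=1..M. alphat p k * \<psi> k 1 * cos_remainder k t)"

definition F_cos_part :: "nat \<Rightarrow> real \<Rightarrow> complex" where
  "F_cos_part M t = (\<Sum>k=p+2..M. F_coeff k * of_real (cos (real (k - p - 1) * t)))"

definition F_sin_part :: "nat \<Rightarrow> real \<Rightarrow> complex" where
  "F_sin_part M t = (\<Sum>k=p+2..M. alphat p k * \<psi> k 1 * \<delta> k * of_real (sin (real (k - p - 1) * t)))"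

lemma F_split:
  "F M t = F_bounded_part M t + F_cos_part M t - of_real t * F_sin_part M t"
proof -
  have "(\<Sum>k\<in>{1..M} \<inter> {..p+1}. F_coeff k * of_real (cos (real (k - p - 1) * t))) =
      (\<Sum>k\<in>{1..M} \<inter> {..p+1}. F_coeff k)"
    by (intro sum.cong) auto
  then have cos: "(\<Sum>k=1..M. F_coeff k * cos (rhot p k * of_real t)) =
      (\<Sum>k\<in>{1..M} \<inter> {..p+1}. F_coeff k) + F_cos_part M t"
    unfolding F_cos_part_def cos_rhot_mult sum_split_low_high[of _ M p] by (simp only:)
  have "(\<Sum>k\<in>{1..M} \<inter> {..p+1}. alphat p k * \<psi> k 1 * \<delta> k * of_real (sin (real (k - p - 1) * t))) = 0"
    by (intro sum.neutral) auto
  then have sin: "(\<Sum>k=1..M. alphat p k * \<psi> k 1 * \<delta> k * sin (rhot p k * of_real t)) = F_sin_part M t"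
    unfolding F_sin_part_def sin_rhot_mult sum_split_low_high[of _ M p] by (simp only: add_0)
  show ?thesis
    unfolding F_def F_term_split sum.distrib sum_subtractf cos sin[symmetric]
      F_bounded_part_def sum_distrib_left
    by (simp add: algebra_simps)
qed

lemma cmod_F_coeff_cos_diff_le:
  assumes "k \<ge> 1" "t \<in> {0..pi}"
  shows "cmod (F_coeff k * (cos (rho lam k * of_real t) - cos (rhot p k * of_real t)))
           \<le> F_coeff_bound * cos_bound * pi * (xi p lam al k)\<^sup>2"
proof -
  have "cmod (F_coeff k * (cos (rho lam k * of_real t) - cos (rhot p k * of_real t)))
      \<le> (F_coeff_bound * xi p lam al k) * (cos_bound * pi * xi p lam al k)"
  proof -
    have "cos_bound * pi * cmod (\<delta> k) \<le> cos_bound * pi * xi p lam al k"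
      using cos_bound_ge_1 by (intro mult_left_mono cmod_rhohat_le_xi) auto
    then show ?thesis
      unfolding norm_mult using cmod_F_coeff_le[OF assms(1)] cmod_cos_rho_diff_le[OF assms]
        F_coeff_bound_nonneg xi_nonneg
      by (intro mult_mono) auto
  qed
  then show ?thesis by (simp add: power2_eq_square algebra_simps)
qed

lemma cmod_remainder_term_le:
  assumes "k \<ge> 1" "t \<in> {0..pi}"
  shows "cmod (alphat p k * \<psi> k 1 * cos_remainder k t) \<le> psi_bound * cos_bound * pi\<^sup>2 * (xi p lam al k)\<^sup>2"
proof -
  have "cmod (alphat p k * \<psi> k 1 * cos_remainder k t) \<le> 1 * psi_bound * (cos_bound * pi\<^sup>2 * (xi p lam al k)\<^sup>2)"
    unfolding norm_mult using cmod_alphat_le_1 cmod_psi_le cmod_cos_remainder_le[OF assms] psi_bound_nonneg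
    by (intro mult_mono) auto
  then show ?thesis by (simp add: algebra_simps)
qed

lemma cmod_F_bounded_part_le:
  assumes t: "t \<in> {0..pi}"
  shows "cmod (F_bounded_part M t) \<le> F_unif_bound"
proof -
  have "cmod (\<Sum>k\<in>{1..M} \<inter> {..p+1}. F_coeff k) \<le> (\<Sum>k\<in>{1..M} \<inter> {..p+1}. F_coeff_bound * \<Omega>)"
  proof (rule order_trans[OF norm_sum sum_mono])
    fix k assume "k \<in> {1..M} \<inter> {..p+1}"
    then show "cmod (F_coeff k) \<le> F_coeff_bound * \<Omega>"
      using cmod_F_coeff_le[of k] mult_left_mono[OF xi_le F_coeff_bound_nonneg, of k] by simp
  qed
  also have "\<dots> \<le> real (p + 1) * (F_coeff_bound * \<Omega>)"
  proof -
    have "card ({1..M} \<inter> {..p+1}) \<le> card {1..p+1}"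
      by (intro card_mono) auto
    then show ?thesis
      using F_coeff_bound_nonneg Omega_pos by (simp add: mult_right_mono)
  qed
  finally have low: "cmod (\<Sum>k\<in>{1..M} \<inter> {..p+1}. F_coeff k) \<le> real (p + 1) * F_coeff_bound * \<Omega>"
    by (simp add: mult.assoc)
  have "cmod (\<Sum>k=1..M. F_coeff k * (cos (rho lam k * of_real t) - cos (rhot p k * of_real t)))
      \<le> (\<Sum>k=1..M. F_coeff_bound * cos_bound * pi * (xi p lam al k)\<^sup>2)"
    by (rule order_trans[OF norm_sum sum_mono]) (auto intro: cmod_F_coeff_cos_diff_le[OF _ t])
  also have "\<dots> \<le> F_coeff_bound * cos_bound * pi * \<Omega>\<^sup>2"
    using F_coeff_bound_nonneg cos_bound_ge_1 by (intro sum_xi_sq_mult_le) auto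
  finally have diff: "cmod (\<Sum>k=1..M. F_coeff k * (cos (rho lam k * of_real t) - cos (rhot p k * of_real t)))
      \<le> F_coeff_bound * cos_bound * pi * \<Omega>\<^sup>2" .
  have "cmod (\<Sum>k=1..M. alphat p k * \<psi> k 1 * cos_remainder k t)
      \<le> (\<Sum>k=1..M. psi_bound * cos_bound * pi\<^sup>2 * (xi p lam al k)\<^sup>2)"
    by (rule order_trans[OF norm_sum sum_mono], rule cmod_remainder_term_le[OF _ t]) auto
  also have "\<dots> \<le> psi_bound * cos_bound * pi\<^sup>2 * \<Omega>\<^sup>2"
    using psi_bound_nonneg cos_bound_ge_1 by (intro sum_xi_sq_mult_le) auto
  finally have rem: "cmod (\<Sum>k=1..M. alphat p k * \<psi> k 1 * cos_remainder k t)
      \<le> psi_bound * cos_bound * pi\<^sup>2 * \<Omega>\<^sup>2" .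
  show ?thesis
    unfolding F_bounded_part_def F_unif_bound_def
    using low diff rem by (meson add_mono norm_triangle_le)
qed

lemma integral_cmod_orthogonal_sum_sq_le:
  assumes orth: "orthogonal_system_0_pi \<phi> I" and I: "finite I" "I \<subseteq> {1..}"
    and c: "\<And>k. k \<in> I \<Longrightarrow> cmod (c k) \<le> B * xi p lam al k" and B: "0 \<le> B"
  shows "integral {0..pi} (\<lambda>t. (cmod (\<Sum>k\<in>I. c k * of_real (\<phi> k t)))\<^sup>2) \<le> pi / 2 * (B\<^sup>2 * \<Omega>\<^sup>2)"
proof -
  have "(\<Sum>k\<in>I. (cmod (c k))\<^sup>2) \<le> (\<Sum>k\<in>I. B\<^sup>2 * (xi p lam al k)\<^sup>2)"
    using c by (intro sum_mono) (simp add: power_mono flip: power_mult_distrib)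
  also have "\<dots> \<le> B\<^sup>2 * \<Omega>\<^sup>2"
    using I by (intro sum_xi_sq_mult_le) auto
  finally show ?thesis
    by (simp add: integral_cmod_sum_orthogonal_sq[OF orth I(1)])
qed

lemma integral_F_cos_part_le:
  "integral {0..pi} (\<lambda>t. (cmod (F_cos_part M t))\<^sup>2) \<le> pi / 2 * (F_coeff_bound\<^sup>2 * \<Omega>\<^sup>2)"
  unfolding F_cos_part_def
  by (rule integral_cmod_orthogonal_sum_sq_le[OF orthogonal_system_cos_shift])
    (auto intro: cmod_F_coeff_le F_coeff_bound_nonneg)

lemma integral_F_sin_part_le:
  "integral {0..pi} (\<lambda>t. (cmod (F_sin_part M t))\<^sup>2) \<le> pi / 2 * (psi_bound\<^sup>2 * \<Omega>\<^sup>2)"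
  unfolding F_sin_part_def
proof (rule integral_cmod_orthogonal_sum_sq_le[OF orthogonal_system_sin_shift])
  fix k
  show "cmod (alphat p k * \<psi> k 1 * \<delta> k) \<le> psi_bound * xi p lam al k"
    unfolding norm_mult
    using mult_mono[OF cmod_alphat_le_1 cmod_psi_le] cmod_rhohat_le_xi psi_bound_nonneg
    by (intro mult_mono) auto
qed (auto intro: psi_bound_nonneg)

lemma integral_cmod_F_sq_le: "integral {0..pi} (\<lambda>t. (cmod (F M t))\<^sup>2) \<le> F_L2_bound"
proof -
  let ?P = "F_cos_part M" and ?Q = "F_sin_part M"
  have cont: "continuous_on S ?P" "continuous_on S ?Q" for S
    unfolding F_cos_part_def F_sin_part_def by (intro continuous_intros)+
  note integrable = integrable_continuous_interval continuous_intros cont continuous_on_F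
  have pointwise: "(cmod (F M t))\<^sup>2 \<le> 3 * (F_unif_bound\<^sup>2 + (cmod (?P t))\<^sup>2 + pi\<^sup>2 * (cmod (?Q t))\<^sup>2)"
    if t: "t \<in> {0..pi}" for t
  proof -
    have "cmod (F M t) \<le> cmod (F_bounded_part M t) + cmod (?P t) + t * cmod (?Q t)"
      unfolding F_split using t
      by (metis norm_triangle_le_diff norm_triangle_le norm_mult norm_of_real abs_of_nonneg
          add_mono order_refl atLeastAtMost_iff)
    also have "\<dots> \<le> F_unif_bound + cmod (?P t) + pi * cmod (?Q t)"
      using cmod_F_bounded_part_le[OF t] t by (intro add_mono mult_right_mono) auto
    finally have "(cmod (F M t))\<^sup>2 \<le> (F_unif_bound + cmod (?P t) + pi * cmod (?Q t))\<^sup>2"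
      by (rule power_mono) simp
    also have "\<dots> \<le> 3 * (F_unif_bound\<^sup>2 + (cmod (?P t))\<^sup>2 + (pi * cmod (?Q t))\<^sup>2)"
      by (rule power2_add3_le)
    finally show ?thesis by (simp add: power_mult_distrib)
  qed
  have "integral {0..pi} (\<lambda>t. (cmod (F M t))\<^sup>2)
      \<le> integral {0..pi} (\<lambda>t. 3 * (F_unif_bound\<^sup>2 + (cmod (?P t))\<^sup>2 + pi\<^sup>2 * (cmod (?Q t))\<^sup>2))"
    by (rule integral_le[OF _ _ pointwise]) (intro integrable | simp)+
  also have "\<dots> = 3 * (pi * F_unif_bound\<^sup>2 + integral {0..pi} (\<lambda>t. (cmod (?P t))\<^sup>2)
      + pi\<^sup>2 * integral {0..pi} (\<lambda>t. (cmod (?Q t))\<^sup>2))"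
    by (simp add: integral_add integrable)
  also have "\<dots> \<le> F_L2_bound"
    unfolding F_L2_bound_def
    using integral_F_cos_part_le integral_F_sin_part_le by (intro mult_left_mono add_mono) auto
  finally show ?thesis .
qed

lemma integral_cmod_F_le: "integral {0..x} (\<lambda>t. cmod (F M t)) \<le> F_L1_bound"
proof -
  note integrable = integrable_continuous_interval continuous_intros continuous_on_F
  have "integral {0..x} (\<lambda>t. cmod (F M t)) \<le> integral {0..x} (\<lambda>t. (1 + (cmod (F M t))\<^sup>2) / 2)"
  proof (rule integral_le)
    fix t
    have "0 \<le> (cmod (F M t) - 1)\<^sup>2" by simp
    then show "cmod (F M t) \<le> (1 + (cmod (F M t))\<^sup>2) / 2"
      by (simp add: power2_eq_square algebra_simps)
  qed (auto intro!: integrable)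
  also have "\<dots> = (x + integral {0..x} (\<lambda>t. (cmod (F M t))\<^sup>2)) / 2"
    using x_nonneg by (simp add: integral_add integral_divide integrable)
  also have "\<dots> \<le> (pi + integral {0..pi} (\<lambda>t. (cmod (F M t))\<^sup>2)) / 2"
    using x_le_pi by (intro divide_right_mono add_mono integral_subset_le integrable) auto
  also have "\<dots> \<le> F_L1_bound"
    using integral_cmod_F_sq_le by (simp add: F_L1_bound_def)
  finally show ?thesis .
qed

lemma integral_cmod_mult_F_sq_le:
  "integral {0..pi} (\<lambda>t. (cmod (of_real t * F M t))\<^sup>2) \<le> pi\<^sup>2 * F_L2_bound"
proof -
  note integrable = integrable_continuous_interval continuous_intros continuous_on_F
  have "integral {0..pi} (\<lambda>t. (cmod (of_real t * F M t))\<^sup>2) \<le> integral {0..pi} (\<lambda>t. pi\<^sup>2 * (cmod (F M t))\<^sup>2)"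
  proof (rule integral_le)
    fix t :: real assume "t \<in> {0..pi}"
    then show "(cmod (of_real t * F M t))\<^sup>2 \<le> pi\<^sup>2 * (cmod (F M t))\<^sup>2"
      by (simp add: norm_mult power_mult_distrib mult_right_mono power_mono)
  qed (intro integrable)+
  also have "\<dots> \<le> pi\<^sup>2 * F_L2_bound"
    using integral_cmod_F_sq_le by simp
  finally show ?thesis .
qed

subsection \<open>Moment sums and summability of g\<close>

lemma sum_cos_moment_sq_le:
  assumes I: "finite I" "I \<subseteq> {1..}"
  shows "(\<Sum>n\<in>I. (cmod (integral {0..x} (\<lambda>t. cos (rhot p n * of_real t) * F M t)))\<^sup>2) \<le> g1_l2_bound"
proof -
  let ?f = "\<lambda>n. (cmod (integral {0..x} (\<lambda>t. cos (rhot p n * of_real t) * F M t)))\<^sup>2"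
  have "sum ?f (I \<inter> {..p+1}) \<le> (\<Sum>n\<in>I \<inter> {..p+1}. F_L1_bound\<^sup>2)"
  proof (rule sum_mono)
    fix n assume "n \<in> I \<inter> {..p+1}"
    then have "cmod (integral {0..x} (\<lambda>t. cos (rhot p n * of_real t) * F M t))
        = cmod (integral {0..x} (F M))"
      by (simp add: rhot_def)
    also have "\<dots> \<le> integral {0..x} (\<lambda>t. cmod (F M t))"
      by (intro integral_norm_bound_integral integrable_continuous_interval continuous_intros
          continuous_on_F) auto
    also have "\<dots> \<le> F_L1_bound"
      by (rule integral_cmod_F_le)
    finally show "?f n \<le> F_L1_bound\<^sup>2"
      by (rule power_mono) simp
  qed
  also have "\<dots> \<le> real (p + 1) * F_L1_bound\<^sup>2"
  proof -
    have "card (I \<inter> {..p+1}) \<le> card {1..p+1}"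
      using I by (intro card_mono) auto
    then show ?thesis by (simp add: mult_right_mono)
  qed
  finally have low: "sum ?f (I \<inter> {..p+1}) \<le> real (p + 1) * F_L1_bound\<^sup>2" .
  have "sum ?f (I - {..p+1}) =
      (\<Sum>n\<in>I - {..p+1}. (cmod (integral {0..x} (\<lambda>t. of_real (cos (real (n - p - 1) * t)) * F M t)))\<^sup>2)"
    by (simp add: cos_rhot_mult)
  also have "\<dots> \<le> pi / 2 * integral {0..pi} (\<lambda>t. (cmod (F M t))\<^sup>2)"
    using I(1) x_in by (intro Bessel_inequality_0_x orthogonal_system_cos_shift continuous_on_F) auto
  also have "\<dots> \<le> pi / 2 * F_L2_bound"
    using integral_cmod_F_sq_le by simp
  finally have high: "sum ?f (I - {..p+1}) \<le> pi / 2 * F_L2_bound" .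
  show ?thesis
    using low high sum.Int_Diff[OF I(1), of ?f "{..p+1}"] by (simp add: g1_l2_bound_def)
qed

lemma sum_sin_moment_sq_le:
  assumes I: "finite I"
  shows "(\<Sum>n\<in>I. (cmod (integral {0..x} (\<lambda>t. sin (rhot p n * of_real t) * (of_real t * F M t))))\<^sup>2)
           \<le> pi / 2 * (pi\<^sup>2 * F_L2_bound)"
proof -
  let ?f = "\<lambda>n. (cmod (integral {0..x} (\<lambda>t. sin (rhot p n * of_real t) * (of_real t * F M t))))\<^sup>2"
  have "sum ?f (I \<inter> {..p+1}) = 0"
    by (intro sum.neutral) (auto simp: rhot_def)
  then have "sum ?f I = sum ?f (I - {..p+1})"
    using sum.Int_Diff[OF I, of ?f "{..p+1}"] by simp
  also have "\<dots> =
      (\<Sum>n\<in>I - {..p+1}. (cmod (integral {0..x} (\<lambda>t. of_real (sin (real (n - p - 1) * t)) * (of_real t * F M t))))\<^sup>2)"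
    by (simp add: sin_rhot_mult)
  also have "\<dots> \<le> pi / 2 * integral {0..pi} (\<lambda>t. (cmod (of_real t * F M t))\<^sup>2)"
    using I x_in by (intro Bessel_inequality_0_x orthogonal_system_sin_shift continuous_intros continuous_on_F) auto
  also have "\<dots> \<le> pi / 2 * (pi\<^sup>2 * F_L2_bound)"
    using integral_cmod_mult_F_sq_le by (intro mult_left_mono) auto
  finally show ?thesis .
qed

lemma cmod_cos_diff_moment_le:
  assumes n: "n \<ge> 1"
  shows "cmod (integral {0..x} (\<lambda>t. (cos (rho lam n * of_real t) - cos (rhot p n * of_real t)) * F M t))
    \<le> cos_bound * pi\<^sup>2 * F_L1_bound * (xi p lam al n)\<^sup>2
      + cmod (\<delta> n) * cmod (integral {0..x} (\<lambda>t. sin (rhot p n * of_real t) * (of_real t * F M t)))"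
proof -
  note integrable = integrable_continuous_interval continuous_intros continuous_on_F
  have "(\<lambda>t. (cos (rho lam n * of_real t) - cos (rhot p n * of_real t)) * F M t) =
      (\<lambda>t. cos_remainder n t * F M t - \<delta> n * (sin (rhot p n * of_real t) * (of_real t * F M t)))"
    by (auto simp: cos_remainder_def algebra_simps)
  then have "cmod (integral {0..x} (\<lambda>t. (cos (rho lam n * of_real t) - cos (rhot p n * of_real t)) * F M t)) =
      cmod (integral {0..x} (\<lambda>t. cos_remainder n t * F M t)
      - \<delta> n * integral {0..x} (\<lambda>t. sin (rhot p n * of_real t) * (of_real t * F M t)))"
    by (simp add: integral_diff integrable cos_remainder_def)
  also have "\<dots> \<le> cmod (integral {0..x} (\<lambda>t. cos_remainder n t * F M t))
      + cmod (\<delta> n) * cmod (integral {0..x} (\<lambda>t. sin (rhot p n * of_real t) * (of_real t * F M t)))"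
    by (rule order_trans[OF norm_triangle_ineq4]) (simp add: norm_mult)
  also have "cmod (integral {0..x} (\<lambda>t. cos_remainder n t * F M t))
      \<le> integral {0..x} (\<lambda>t. cos_bound * pi\<^sup>2 * (xi p lam al n)\<^sup>2 * cmod (F M t))"
  proof (rule integral_norm_bound_integral)
    fix t assume "t \<in> {0..x}"
    then have "t \<in> {0..pi}" using x_le_pi by auto
    then show "cmod (cos_remainder n t * F M t) \<le> cos_bound * pi\<^sup>2 * (xi p lam al n)\<^sup>2 * cmod (F M t)"
      unfolding norm_mult by (intro mult_right_mono cmod_cos_remainder_le n) auto
  qed (auto simp: cos_remainder_def intro!: integrable)
  also have "\<dots> \<le> cos_bound * pi\<^sup>2 * (xi p lam al n)\<^sup>2 * F_L1_bound"
    using integral_cmod_F_le cos_bound_ge_1 by (simp add: mult_left_mono)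
  finally show ?thesis by (simp add: algebra_simps)
qed

lemma sum_cos_diff_moment_le:
  assumes I: "finite I" "I \<subseteq> {1..}"
  shows "(\<Sum>n\<in>I. cmod (integral {0..x} (\<lambda>t. (cos (rho lam n * of_real t) - cos (rhot p n * of_real t)) * F M t)))
           \<le> gdiff_l1_bound"
proof -
  let ?Y = "\<lambda>n. cmod (integral {0..x} (\<lambda>t. sin (rhot p n * of_real t) * (of_real t * F M t)))"
  let ?A = "cos_bound * pi\<^sup>2 * F_L1_bound"
  have "(\<Sum>n\<in>I. cmod (integral {0..x} (\<lambda>t. (cos (rho lam n * of_real t) - cos (rhot p n * of_real t)) * F M t)))
      \<le> (\<Sum>n\<in>I. ?A * (xi p lam al n)\<^sup>2 + ((xi p lam al n)\<^sup>2 + (?Y n)\<^sup>2) / 2)"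
  proof (rule sum_mono)
    fix n assume "n \<in> I"
    then have n: "n \<ge> 1" using I by auto
    \<comment> \<open>the factor \<delta> n is only square summable, so it is paired with ?Y n by AM-GM\<close>
    have "cmod (\<delta> n) * ?Y n \<le> xi p lam al n * ?Y n"
      by (intro mult_right_mono cmod_rhohat_le_xi) simp
    also have "\<dots> \<le> ((xi p lam al n)\<^sup>2 + (?Y n)\<^sup>2) / 2"
      using sum_squares_bound[of "xi p lam al n" "?Y n"] by (simp add: power2_eq_square)
    finally show "cmod (integral {0..x} (\<lambda>t. (cos (rho lam n * of_real t) - cos (rhot p n * of_real t)) * F M t))
        \<le> ?A * (xi p lam al n)\<^sup>2 + ((xi p lam al n)\<^sup>2 + (?Y n)\<^sup>2) / 2"
      using cmod_cos_diff_moment_le[OF n, of M] by linarith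
  qed
  also have "\<dots> = ?A * (\<Sum>n\<in>I. (xi p lam al n)\<^sup>2) + ((\<Sum>n\<in>I. (xi p lam al n)\<^sup>2) + (\<Sum>n\<in>I. (?Y n)\<^sup>2)) / 2"
    by (simp add: sum.distrib sum_distrib_left add_divide_distrib flip: sum_divide_distrib)
  also have "\<dots> \<le> ?A * \<Omega>\<^sup>2 + (\<Omega>\<^sup>2 + pi / 2 * (pi\<^sup>2 * F_L2_bound)) / 2"
    using sum_xi_sq_le[OF I] sum_sin_moment_sq_le[OF I(1), of M] cos_bound_ge_1 F_L2_bound_nonneg
    by (intro add_mono mult_left_mono divide_right_mono) (auto simp: F_L1_bound_def)
  finally show ?thesis by (simp add: gdiff_l1_bound_def)
qed

lemma sum_g1_sq_le:
  assumes I: "finite I" "I \<subseteq> {1..}"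
  shows "(\<Sum>n\<in>I. (cmod (g p lam al x n 1))\<^sup>2) \<le> g1_l2_bound"
proof (rule LIMSEQ_le_const2)
  show "(\<lambda>M. \<Sum>n\<in>I. (cmod (\<Sum>k<M. gterm p lam al x n 1 (Suc k)))\<^sup>2) \<longlonglongrightarrow> (\<Sum>n\<in>I. (cmod (g p lam al x n 1))\<^sup>2)"
    using I by (intro tendsto_sum tendsto_power tendsto_norm partial_sums_gterm_tendsto) auto
  show "\<exists>N. \<forall>M\<ge>N. (\<Sum>n\<in>I. (cmod (\<Sum>k<M. gterm p lam al x n 1 (Suc k)))\<^sup>2) \<le> g1_l2_bound"
    using sum_cos_moment_sq_le[OF I] by (simp add: sum_gterm_eq_integral rhoi_def)
qed

lemma sum_g_diff_le:
  assumes I: "finite I" "I \<subseteq> {1..}"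
  shows "(\<Sum>n\<in>I. cmod (g p lam al x n 0 - g p lam al x n 1)) \<le> gdiff_l1_bound"
proof (rule LIMSEQ_le_const2)
  let ?S = "\<lambda>M n i. \<Sum>k<M. gterm p lam al x n i (Suc k)"
  show "(\<lambda>M. \<Sum>n\<in>I. cmod (?S M n 0 - ?S M n 1)) \<longlonglongrightarrow> (\<Sum>n\<in>I. cmod (g p lam al x n 0 - g p lam al x n 1))"
    using I by (intro tendsto_sum tendsto_norm tendsto_diff partial_sums_gterm_tendsto) auto
  have "?S M n 0 - ?S M n 1 =
      integral {0..x} (\<lambda>t. (cos (rho lam n * of_real t) - cos (rhot p n * of_real t)) * F M t)" for M n
    unfolding sum_gterm_eq_integral left_diff_distrib
    by (simp add: integral_diff integrable_continuous_interval continuous_intros continuous_on_F rhoi_def)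
  then show "\<exists>N. \<forall>M\<ge>N. (\<Sum>n\<in>I. cmod (?S M n 0 - ?S M n 1)) \<le> gdiff_l1_bound"
    using sum_cos_diff_moment_le[OF I] by simp
qed

lemma sum_g0_sq_le:
  assumes I: "finite I" "I \<subseteq> {1..}"
  shows "(\<Sum>n\<in>I. (cmod (g p lam al x n 0))\<^sup>2) \<le> g_l2_bound"
proof -
  have "(\<Sum>n\<in>I. (cmod (g p lam al x n 0))\<^sup>2)
      \<le> (\<Sum>n\<in>I. 2 * w_bound\<^sup>2 * (xi p lam al n)\<^sup>2 + 2 * (cmod (g p lam al x n 1))\<^sup>2)"
  proof (rule sum_mono)
    fix n assume "n \<in> I"
    then have n: "n \<ge> 1" using I by auto
    have "(cmod (g p lam al x n 0))\<^sup>2 \<le> (xi p lam al n * w_bound + cmod (g p lam al x n 1))\<^sup>2"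
      using cmod_g0_le[OF n] by (rule power_mono) simp
    also have "\<dots> \<le> 2 * (xi p lam al n * w_bound)\<^sup>2 + 2 * (cmod (g p lam al x n 1))\<^sup>2"
      using sum_squares_bound[of "xi p lam al n * w_bound" "cmod (g p lam al x n 1)"]
      by (simp add: power2_eq_square algebra_simps)
    finally show "(cmod (g p lam al x n 0))\<^sup>2 \<le> 2 * w_bound\<^sup>2 * (xi p lam al n)\<^sup>2 + 2 * (cmod (g p lam al x n 1))\<^sup>2"
      by (simp add: power_mult_distrib algebra_simps)
  qed
  also have "\<dots> \<le> 2 * w_bound\<^sup>2 * \<Omega>\<^sup>2 + 2 * g1_l2_bound"
    using sum_xi_sq_mult_le[OF I, of "2 * w_bound\<^sup>2"] sum_g1_sq_le[OF I]
    by (simp add: sum.distrib flip: sum_distrib_left)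
  finally show ?thesis by (simp add: g_l2_bound_def)
qed

lemma sum_g_sq_le:
  assumes "i \<le> 1" and I: "finite I" "I \<subseteq> {1..}"
  shows "(\<Sum>n\<in>I. (cmod (g p lam al x n i))\<^sup>2) \<le> g_l2_bound"
  using assms(1) sum_g0_sq_le[OF I] order_trans[OF sum_g1_sq_le[OF I] g1_l2_bound_le]
  by (cases i) auto

lemma g_sq_summable_le:
  assumes i: "i \<le> 1"
  shows "summable (\<lambda>n. (cmod (g p lam al x (Suc n) i))\<^sup>2)"
    and "sqrt (\<Sum>n. (cmod (g p lam al x (Suc n) i))\<^sup>2) \<le> uniform_bound"
proof -
  note bounded = summable_Suc_if_finite_sums_bounded[of "\<lambda>n. (cmod (g p lam al x n i))\<^sup>2" g_l2_bound,
      OF zero_le_power2 sum_g_sq_le[OF i]]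
  show "summable (\<lambda>n. (cmod (g p lam al x (Suc n) i))\<^sup>2)"
    by (rule bounded(1))
  show "sqrt (\<Sum>n. (cmod (g p lam al x (Suc n) i))\<^sup>2) \<le> uniform_bound"
    using real_sqrt_le_mono[OF bounded(2)] le_uniform_bound(3) by (rule order_trans)
qed

lemma g_diff_summable_le:
  shows "summable (\<lambda>n. cmod (g p lam al x (Suc n) 0 - g p lam al x (Suc n) 1))"
    and "(\<Sum>n. cmod (g p lam al x (Suc n) 0 - g p lam al x (Suc n) 1)) \<le> uniform_bound"
proof -
  note bounded = summable_Suc_if_finite_sums_bounded[of "\<lambda>n. cmod (g p lam al x n 0 - g p lam al x n 1)"
      gdiff_l1_bound, OF norm_ge_zero sum_g_diff_le]
  show "summable (\<lambda>n. cmod (g p lam al x (Suc n) 0 - g p lam al x (Suc n) 1))"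
    by (rule bounded(1))
  show "(\<Sum>n. cmod (g p lam al x (Suc n) 0 - g p lam al x (Suc n) 1)) \<le> uniform_bound"
    using bounded(2) le_uniform_bound(4) by (rule order_trans)
qed

end

theorem lemma3p5:
  fixes p :: nat and \<Omega> K :: real
  assumes "\<Omega> > 0" and "K > 0"
  shows "\<exists>C. \<forall>lam al. BOK p \<Omega> K lam al \<longrightarrow>
           (\<forall>x\<in>{0..pi}.
              (\<forall>n i. n \<ge> 1 \<longrightarrow> i \<le> 1 \<longrightarrow>
                  cmod (psi p lam al x n i) \<le> C \<and>
                  summable (gterm p lam al x n i \<circ> Suc) \<and>
                  cmod (g p lam al x n i) \<le> C) \<and>
              (\<forall>i\<le>1. summable (\<lambda>n. (cmod (g p lam al x (Suc n) i))\<^sup>2) \<and>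
                  sqrt (\<Sum>n. (cmod (g p lam al x (Suc n) i))\<^sup>2) \<le> C) \<and>
              summable (\<lambda>n. cmod (g p lam al x (Suc n) 0 - g p lam al x (Suc n) 1)) \<and>
              (\<Sum>n. cmod (g p lam al x (Suc n) 0 - g p lam al x (Suc n) 1)) \<le> C)"
proof -
  interpret BOK_constants p \<Omega> K
    using assms by unfold_locales
  show ?thesis
  proof (intro exI[of _ uniform_bound] allI impI ballI conjI)
    fix lam al x
    assume "BOK p \<Omega> K lam al" "x \<in> {0..pi}"
    then interpret BOK_point p \<Omega> K lam al x
      by unfold_locales
    show "cmod (psi p lam al x n i) \<le> uniform_bound" for n i
      using cmod_psi_le le_uniform_bound(1) by (rule order_trans)
    show "summable (gterm p lam al x n i \<circ> Suc)" if "n \<ge> 1" "i \<le> 1" for n i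
      using that by (rule summable_gterm)
    show "cmod (g p lam al x n i) \<le> uniform_bound" if "n \<ge> 1" "i \<le> 1" for n i
      using cmod_g_le[OF that] le_uniform_bound(2) by (rule order_trans)
    show "summable (\<lambda>n. (cmod (g p lam al x (Suc n) i))\<^sup>2)"
      and "sqrt (\<Sum>n. (cmod (g p lam al x (Suc n) i))\<^sup>2) \<le> uniform_bound" if "i \<le> 1" for i
      using that by (rule g_sq_summable_le)+
    show "summable (\<lambda>n. cmod (g p lam al x (Suc n) 0 - g p lam al x (Suc n) 1))"
      and "(\<Sum>n. cmod (g p lam al x (Suc n) 0 - g p lam al x (Suc n) 1)) \<le> uniform_bound"
      by (rule g_diff_summable_le)+
  qed
qed

end
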